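(* Let $f:\mathbb{R}^d\to\mathbb{R}$ be convex and $L$-smooth (i.e. differentiable with $L$-Lipschitz gradient), with a minimizer $\theta^*$, and let $\hat L\ge L$ and $\gamma_0>0$. Consider the following idealized (P)ARS-OPT iteration, started from $\theta_0\in\mathbb{R}^d$ with $m_0=\theta_0$. At each iteration $t=0,1,\dots,T-1$: (i) a scalar $\zeta_t>0$ is chosen that is measurable with respect to $\mathcal{F}_t$, the $\sigma$-algebra generated by all randomness used before iteration $t$; (ii) $\alpha_t\in(0,1)$ is the positive root of $\alpha_t^2=\zeta_t\gamma_t(1-\alpha_t)$, $\tilde\theta_t=(1-\alpha_t)\theta_t+\alpha_t m_t$, and $\gamma_{t+1}=(1-\alpha_t)\gamma_t$; (iii) a random orthonormal family $\mathbf{v}_t,\mathbf{p}_{t,1},\dots,\mathbf{p}_{t,s}$ ($s\ge 0$) is drawn, and $g_1(\tilde\theta_t)=\nabla f(\tilde\theta_t)^\top\mathbf{v}_t\,\mathbf{v}_t+\sum_{i=1}^s\nabla f(\tilde\theta_t)^\top\mathbf{p}_{t,i}\,\mathbf{p}_{t,i}$ (the orthogonal projection of $\nabla f(\tilde\theta_t)$ onto the span of this family), while $g_2(\tilde\theta_t)$ is a random vector satisfying $\mathbb{E}_t[g_2(\tilde\theta_t)]=\nabla f(\tilde\theta_t)$, where $\mathbb{E}_t$ denotes conditional expectation given $\mathcal{F}_t$; (iv) the step size satisfies $\zeta_t\le \dfrac{\mathbb{E}_t\big[\|g_1(\tilde\theta_t)\|^2\big]}{\hat L\,\mathbb{E}_t\big[\|g_2(\tilde\theta_t)\|^2\big]}$;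 (v) $\theta_{t+1}=\tilde\theta_t-\frac{1}{\hat L}g_1(\tilde\theta_t)$ and $m_{t+1}=m_t-\frac{\zeta_t}{\alpha_t}g_2(\tilde\theta_t)$. Then $$\mathbb{E}\left[\big(f(\theta_T)-f(\theta^* )\big)\left(1+\frac{\sqrt{\gamma_0}}{2}\sum_{t=0}^{T-1}\sqrt{\zeta_t}\right)^2\right]\le f(\theta_0)-f(\theta^* )+\frac{\gamma_0}{2}\|\theta_0-\theta^*\|^2.$$
   Context: In the ARS-OPT case $s=0$ and $g_1(\tilde\theta_t)=\nabla f(\tilde\theta_t)^\top\mathbf{v}_t\,\mathbf{v}_t$ with $\mathbf{v}_t$ a unit vector. $\|\cdot\|$ is the Euclidean norm. *)

theory Defs
  imports "HOL-Analysis.Analysis" "HOL-Probability.Probability"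
begin

end

theory Submission
  imports Defs
begin

(* With the weight gamma0 / gamma t, the quantity
     E t = gamma0 / gamma t * (f (theta t) - f thetastar) + gamma0 / 2 * |m t - thetastar|^2
   satisfies E (t+1) <= E t + gamma0 / gamma (t+1) * drift t pointwise: this combines convexity at
   thetat t, the descent lemma for the step along g1 (an orthogonal projection of the gradient, so
   gradf . g1 = |g1|^2) and the expansion of |m (t+1) - thetastar|^2, the relation
   alpha^2 = zeta gamma (1 - alpha) making the coefficients match. Given F t, the cross term of the
   drift has mean zero because g2 is unbiased, and the two quadratic terms cancel on average by the
   step-size condition (iv); hence the expectation of E T is at most E 0. As only g1 and g2 are
   assumed integrable, expectations are nonnegative integrals and the drift is integrated over
   F t-measurable sets on which its F t-measurable coefficients are bounded. Finally the recursion
   for gamma gives 1 / sqrt (gamma (t+1)) >= 1 / sqrt (gamma t) + sqrt (zeta t) / 2, whence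
   gamma0 / gamma T >= (1 + sqrt gamma0 / 2 * (sum of sqrt (zeta t)))^2. *)

section \<open>Smooth convex functions\<close>

lemma has_real_derivative_along_line:
  fixes f :: "'a::real_inner \<Rightarrow> real"
  assumes "GDERIV f (x + s *\<^sub>R h) :> D"
  shows "((\<lambda>s. f (x + s *\<^sub>R h)) has_real_derivative D \<bullet> h) (at s)"
proof -
  have "((\<lambda>s. x + s *\<^sub>R h) has_derivative (\<lambda>t. t *\<^sub>R h)) (at s)"
    by (auto intro!: derivative_eq_intros)
  from has_derivative_compose[OF this assms[unfolded gderiv_def]]
  have "((\<lambda>s. f (x + s *\<^sub>R h)) has_derivative (\<lambda>t. (D \<bullet> h) * t)) (at s)"
    by (simp add: o_def inner_commute mult.commute)
  then show ?thesis
    by (simp add: has_field_derivative_def)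
qed

lemma convex_on_gradient_inequality:
  fixes f :: "'a::real_inner \<Rightarrow> real"
  assumes cvx: "convex_on UNIV f" and grad: "GDERIV f x :> D"
  shows "f x + D \<bullet> (y - x) \<le> f y"
proof -
  define phi where "phi s = f (x + s *\<^sub>R (y - x))" for s
  have "convex_on UNIV phi"
  proof (rule convex_onI)
    fix t a b :: real assume "0 < t" "t < 1"
    have "x + ((1 - t) * a + t * b) *\<^sub>R (y - x)
        = (1 - t) *\<^sub>R (x + a *\<^sub>R (y - x)) + t *\<^sub>R (x + b *\<^sub>R (y - x))"
      by (simp add: algebra_simps)
    then show "phi ((1 - t) *\<^sub>R a + t *\<^sub>R b) \<le> (1 - t) * phi a + t * phi b"
      unfolding phi_def using convex_onD[OF cvx, of t] \<open>0 < t\<close> \<open>t < 1\<close> by simp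
  qed simp
  moreover have "(phi has_real_derivative D \<bullet> (y - x)) (at 0)"
    unfolding phi_def by (rule has_real_derivative_along_line) (simp add: grad)
  ultimately have "phi 1 - phi 0 \<ge> D \<bullet> (y - x) * (1 - 0)"
    by (intro convex_on_imp_above_tangent) auto
  then show ?thesis by (simp add: phi_def)
qed

lemma lipschitz_gradient_upper_bound:
  fixes f :: "'a::real_inner \<Rightarrow> real"
  assumes grad: "\<And>z. GDERIV f z :> G z" and lip: "L-lipschitz_on UNIV G"
  shows "f y \<le> f x + G x \<bullet> (y - x) + L / 2 * (norm (y - x))\<^sup>2"
proof -
  define h where "h = y - x"
  define psi where "psi s = f (x + s *\<^sub>R h) - s * (G x \<bullet> h) - L / 2 * s\<^sup>2 * (norm h)\<^sup>2" for s
  have "(psi has_real_derivative (G (x + s *\<^sub>R h) - G x) \<bullet> h - L * s * (norm h)\<^sup>2) (at s)" for s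
    unfolding psi_def
    by (auto intro!: derivative_eq_intros has_real_derivative_along_line grad
             simp: inner_diff_left field_simps)
  then obtain z where z: "0 < z" "z < 1"
    and mvt: "psi 1 - psi 0 = (G (x + z *\<^sub>R h) - G x) \<bullet> h - L * z * (norm h)\<^sup>2"
    using MVT2[of 0 1 psi] by force
  have "(G (x + z *\<^sub>R h) - G x) \<bullet> h \<le> norm (G (x + z *\<^sub>R h) - G x) * norm h"
    by (rule norm_cauchy_schwarz)
  also have "\<dots> \<le> L * norm (z *\<^sub>R h) * norm h"
    using lipschitz_onD[OF lip, of "x + z *\<^sub>R h" x]
    by (intro mult_right_mono) (auto simp: dist_norm)
  also have "\<dots> = L * z * (norm h)\<^sup>2"
    using z by (simp add: power2_eq_square)
  finally have "psi 1 \<le> psi 0" using mvt by simp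
  then show ?thesis by (simp add: psi_def h_def)
qed

lemma inner_orthonormal_projection:
  fixes e :: "'i \<Rightarrow> 'a::real_inner"
  assumes "finite I" and unit: "\<And>i. i \<in> I \<Longrightarrow> norm (e i) = 1"
    and orth: "\<And>i j. i \<in> I \<Longrightarrow> j \<in> I \<Longrightarrow> i \<noteq> j \<Longrightarrow> e i \<bullet> e j = 0"
  shows "G \<bullet> (\<Sum>i\<in>I. (G \<bullet> e i) *\<^sub>R e i) = (norm (\<Sum>i\<in>I. (G \<bullet> e i) *\<^sub>R e i))\<^sup>2"
proof -
  have "pairwise (\<lambda>i j. orthogonal ((G \<bullet> e i) *\<^sub>R e i) ((G \<bullet> e j) *\<^sub>R e j)) I"
    using orth by (auto simp: pairwise_def orthogonal_def)
  then have "(norm (\<Sum>i\<in>I. (G \<bullet> e i) *\<^sub>R e i))\<^sup>2 = (\<Sum>i\<in>I. (G \<bullet> e i)\<^sup>2)"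
    using unit by (simp add: norm_sum_Pythagorean[OF \<open>finite I\<close>] power_mult_distrib)
  also have "\<dots> = G \<bullet> (\<Sum>i\<in>I. (G \<bullet> e i) *\<^sub>R e i)"
    by (simp add: inner_sum_right power2_eq_square)
  finally show ?thesis ..
qed

lemma projected_gradient_descent_step:
  fixes f :: "'a::real_inner \<Rightarrow> real"
  assumes grad: "\<And>z. GDERIV f z :> G z" and lip: "L-lipschitz_on UNIV G"
    and "L \<le> Lh" "0 < Lh" and proj: "G x \<bullet> g = (norm g)\<^sup>2"
  shows "f (x - (1 / Lh) *\<^sub>R g) \<le> f x - (norm g)\<^sup>2 / (2 * Lh)"
proof -
  have "f (x - (1 / Lh) *\<^sub>R g) \<le> f x - (norm g)\<^sup>2 / Lh + L / 2 * ((norm g)\<^sup>2 / Lh\<^sup>2)"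
    using lipschitz_gradient_upper_bound[OF grad lip, of "x - (1 / Lh) *\<^sub>R g" x] proj \<open>0 < Lh\<close>
    by (simp add: power_divide)
  also have "L / 2 * ((norm g)\<^sup>2 / Lh\<^sup>2) \<le> Lh / 2 * ((norm g)\<^sup>2 / Lh\<^sup>2)"
    using \<open>L \<le> Lh\<close> by (intro mult_right_mono) auto
  also have "Lh / 2 * ((norm g)\<^sup>2 / Lh\<^sup>2) = (norm g)\<^sup>2 / (2 * Lh)"
    by (simp add: power2_eq_square)
  finally show ?thesis by simp
qed

section \<open>One step of the accelerated scheme\<close>

lemma accelerated_step_potential_bound:
  fixes f :: "'a::real_inner \<Rightarrow> real"
  assumes cvx: "convex_on UNIV f" and grad: "\<And>z. GDERIV f z :> G z"
    and lip: "L-lipschitz_on UNIV G" and "L \<le> Lh" "0 < Lh"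
    and al: "0 < al" "al < 1" and root: "al\<^sup>2 = ze * ga * (1 - al)"
    and tt: "tt = (1 - al) *\<^sub>R th + al *\<^sub>R m"
    and proj: "G tt \<bullet> g = (norm g)\<^sup>2"
  shows "f (tt - (1 / Lh) *\<^sub>R g) - f ts + (1 - al) * ga / 2 * (norm (m - (ze / al) *\<^sub>R h - ts))\<^sup>2
    \<le> (1 - al) * (f th - f ts + ga / 2 * (norm (m - ts))\<^sup>2)
       + al * ((G tt - h) \<bullet> (m - ts)) + ze / 2 * (norm h)\<^sup>2 - (norm g)\<^sup>2 / (2 * Lh)"
proof -
  have descent: "f (tt - (1 / Lh) *\<^sub>R g) \<le> f tt - (norm g)\<^sup>2 / (2 * Lh)"
    by (rule projected_gradient_descent_step[OF grad lip \<open>L \<le> Lh\<close> \<open>0 < Lh\<close> proj])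
  have "(1 - al) * (f tt + G tt \<bullet> (th - tt)) \<le> (1 - al) * f th"
    using convex_on_gradient_inequality[OF cvx grad] al by (intro mult_left_mono) auto
  moreover have "al * (f tt + G tt \<bullet> (ts - tt)) \<le> al * f ts"
    using convex_on_gradient_inequality[OF cvx grad] al by (intro mult_left_mono) auto
  moreover have "(1 - al) * (G tt \<bullet> (th - tt)) + al * (G tt \<bullet> (ts - tt)) = - al * (G tt \<bullet> (m - ts))"
    by (simp add: tt algebra_simps inner_diff_right inner_add_right)
  ultimately have convexity: "f tt - f ts \<le> (1 - al) * (f th - f ts) + al * (G tt \<bullet> (m - ts))"
    by (simp add: algebra_simps)
  have momentum: "(1 - al) * ga / 2 * (norm (m - (ze / al) *\<^sub>R h - ts))\<^sup>2
      = (1 - al) * (ga / 2 * (norm (m - ts))\<^sup>2) - al * (h \<bullet> (m - ts)) + ze / 2 * (norm h)\<^sup>2"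
  proof -
    define c where "c = ze / al"
    have c1: "(1 - al) * ga * c = al"
      using root al by (simp add: c_def power2_eq_square field_simps)
    have "(1 - al) * ga * c\<^sup>2 = ((1 - al) * ga * c) * c"
      by (simp add: power2_eq_square)
    also have "\<dots> = ze"
      unfolding c1 using al by (simp add: c_def)
    finally have c2: "(1 - al) * ga * c\<^sup>2 = ze" .
    have "m - c *\<^sub>R h - ts = (m - ts) - c *\<^sub>R h"
      by simp
    then have sq: "(norm (m - c *\<^sub>R h - ts))\<^sup>2
        = (norm (m - ts))\<^sup>2 - 2 * c * (h \<bullet> (m - ts)) + c\<^sup>2 * (norm h)\<^sup>2"
      unfolding power2_norm_eq_inner
      by (simp add: inner_diff_left inner_diff_right inner_commute power2_eq_square algebra_simps)
    have "(1 - al) * ga / 2 * (N - 2 * c * X + c\<^sup>2 * Y)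
        = (1 - al) * (ga / 2 * N) - ((1 - al) * ga * c) * X + (1 - al) * ga * c\<^sup>2 / 2 * Y"
      for N X Y :: real
      by (simp add: field_simps)
    then show ?thesis
      unfolding c_def[symmetric] sq c1 c2 by simp
  qed
  show ?thesis
    using descent convexity momentum by (simp add: inner_diff_left algebra_simps)
qed

lemma inv_sqrt_step_bound:
  fixes ga al ze :: real
  assumes "0 < ga" "0 < al" "al < 1" and root: "al\<^sup>2 = ze * ga * (1 - al)"
  shows "1 / sqrt ga + sqrt ze / 2 \<le> 1 / sqrt ((1 - al) * ga)"
proof -
  define a where "a = sqrt ga"
  define b where "b = sqrt ((1 - al) * ga)"
  have "0 < b" "b < a" "a\<^sup>2 = ga" "b\<^sup>2 = (1 - al) * ga"
    using assms by (auto simp: a_def b_def)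
  have "sqrt ze = al / b"
    using root \<open>0 < b\<close> \<open>0 < al\<close> \<open>b\<^sup>2 = (1 - al) * ga\<close>
    by (intro real_sqrt_unique) (auto simp: power_divide mult.commute mult.left_commute)
  have "al * a * a = al * ga"
    using \<open>a\<^sup>2 = ga\<close> by (simp add: power2_eq_square)
  also have "\<dots> = (a - b) * (a + b)"
    using \<open>a\<^sup>2 = ga\<close> \<open>b\<^sup>2 = (1 - al) * ga\<close> by (simp add: power2_eq_square algebra_simps)
  also have "\<dots> \<le> (a - b) * (2 * a)"
    using \<open>b < a\<close> by (intro mult_left_mono) auto
  finally have "al * a \<le> 2 * (a - b)"
    using \<open>0 < b\<close> \<open>b < a\<close> by (simp add: mult.commute mult.left_commute)
  then have "b * (al * a) \<le> b * (2 * (a - b))"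
    using \<open>0 < b\<close> by (intro mult_left_mono) auto
  then show ?thesis
    unfolding \<open>sqrt ze = al / b\<close> a_def[symmetric] b_def[symmetric]
    using \<open>0 < b\<close> \<open>b < a\<close> by (simp add: field_simps)
qed

section \<open>Integration against conditional expectations\<close>

lemma integrable_bounded_mult:
  fixes g h :: "'a \<Rightarrow> real"
  assumes g: "integrable M g" and h: "h \<in> borel_measurable M"
    and bound: "\<And>x. x \<in> space M \<Longrightarrow> \<bar>h x\<bar> \<le> K"
  shows "integrable M (\<lambda>x. h x * g x)"
proof (rule Bochner_Integration.integrable_bound[OF integrable_mult_right[OF g, of K]])
  show "(\<lambda>x. h x * g x) \<in> borel_measurable M"
    using h g by measurable
  show "AE x in M. norm (h x * g x) \<le> norm (K * g x)"
  proof (rule AE_I2)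
    fix x assume "x \<in> space M"
    with bound have "\<bar>h x\<bar> \<le> K" "0 \<le> K" by (auto intro: order_trans[OF abs_ge_zero])
    then show "norm (h x * g x) \<le> norm (K * g x)"
      by (auto simp: abs_mult intro: mult_right_mono)
  qed
qed

lemma nn_integral_le_of_le_add_integral_nonpos:
  fixes Z Y R :: "'a \<Rightarrow> real"
  assumes [measurable]: "Z \<in> borel_measurable M" "Y \<in> borel_measurable M"
    and R: "integrable M R" "(\<integral>x. R x \<partial>M) \<le> 0"
    and Z_nonneg: "\<And>x. x \<in> space M \<Longrightarrow> 0 \<le> Z x"
    and Y_nonneg: "\<And>x. x \<in> space M \<Longrightarrow> 0 \<le> Y x"
    and le: "\<And>x. x \<in> space M \<Longrightarrow> Z x \<le> Y x + R x"
  shows "(\<integral>\<^sup>+x. Z x \<partial>M) \<le> (\<integral>\<^sup>+x. Y x \<partial>M)"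
proof (cases "(\<integral>\<^sup>+x. Y x \<partial>M) = \<infinity>")
  case False
  then have Y: "integrable M Y"
    using Y_nonneg by (intro integrableI_nonneg) (auto simp: top.not_eq_extremum)
  have "AE x in M. norm (Z x) \<le> norm (Y x + R x)"
    using Z_nonneg le by (intro AE_I2) (simp add: order_trans[OF _ abs_ge_self])
  then have Z: "integrable M Z"
    by (intro Bochner_Integration.integrable_bound[OF Bochner_Integration.integrable_add[OF Y R(1)]])
       auto
  have "(\<integral>\<^sup>+x. Z x \<partial>M) = ennreal (\<integral>x. Z x \<partial>M)"
    using Z Z_nonneg by (intro nn_integral_eq_integral) auto
  also have "(\<integral>x. Z x \<partial>M) \<le> (\<integral>x. Y x + R x \<partial>M)"
    using Z Y R le by (intro integral_mono) auto
  also have "\<dots> \<le> (\<integral>x. Y x \<partial>M)"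
    using Y R by simp
  also have "ennreal (\<integral>x. Y x \<partial>M) = (\<integral>\<^sup>+x. Y x \<partial>M)"
    using Y Y_nonneg by (intro nn_integral_eq_integral[symmetric]) auto
  finally show ?thesis
    by (simp add: ennreal_leI)
qed simp

lemma nn_integral_le_of_exhausting_truncations:
  fixes Z :: "'a \<Rightarrow> ennreal"
  assumes A: "incseq A" "\<And>n. A n \<in> sets M" "space M \<subseteq> (\<Union>n. A n)"
    and [measurable]: "Z \<in> borel_measurable M"
    and bound: "\<And>n. (\<integral>\<^sup>+x. indicator (A n) x * Z x \<partial>M) \<le> c"
  shows "(\<integral>\<^sup>+x. Z x \<partial>M) \<le> c"
proof -
  note [measurable] = A(2)
  have inc: "incseq (\<lambda>n x. indicator (A n) x * Z x)"
    using A(1) by (auto simp: incseq_def le_fun_def split: split_indicator intro!: mult_right_mono)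
  have "(\<integral>\<^sup>+x. Z x \<partial>M) = (\<integral>\<^sup>+x. (SUP n. indicator (A n) x * Z x) \<partial>M)"
  proof (rule nn_integral_cong)
    fix x assume "x \<in> space M"
    with A(3) obtain N where "x \<in> A N" by blast
    then have "Z x \<le> (SUP n. indicator (A n) x * Z x)"
      by (intro SUP_upper2[of N]) auto
    moreover have "(SUP n. indicator (A n) x * Z x) \<le> Z x"
      by (intro SUP_least) (simp split: split_indicator)
    ultimately show "Z x = (SUP n. indicator (A n) x * Z x)"
      by (rule antisym)
  qed
  also have "\<dots> = (SUP n. \<integral>\<^sup>+x. indicator (A n) x * Z x \<partial>M)"
    by (intro nn_integral_monotone_convergence_SUP[OF inc]) measurable
  also have "\<dots> \<le> c"
    using bound by (rule SUP_least)
  finally show ?thesis .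
qed

context sigma_finite_subalgebra
begin

lemma integral_mult_real_cond_exp_AE_eq:
  fixes c X Y :: "'a \<Rightarrow> real"
  assumes c: "c \<in> borel_measurable F" "\<And>x. x \<in> space M \<Longrightarrow> \<bar>c x\<bar> \<le> K"
    and X: "integrable M X" and Y: "Y \<in> borel_measurable M"
    and cond_exp: "AE x in M. real_cond_exp M F X x = Y x"
  shows "integrable M (\<lambda>x. c x * Y x)" "(\<integral>x. c x * Y x \<partial>M) = (\<integral>x. c x * X x \<partial>M)"
proof -
  have [measurable]: "c \<in> borel_measurable M" "X \<in> borel_measurable M"
    using measurable_from_subalg[OF subalg c(1)] X by auto
  note [measurable] = Y
  have cX: "integrable M (\<lambda>x. c x * X x)"
    using integrable_bounded_mult[OF X _ c(2)] by measurable
  have ae: "AE x in M. c x * real_cond_exp M F X x = c x * Y x"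
    using cond_exp by eventually_elim simp
  show "integrable M (\<lambda>x. c x * Y x)"
    by (rule integrable_cong_AE_imp[OF real_cond_exp_intg(1)[OF cX c(1)] _ ae]) measurable
  have "(\<integral>x. c x * Y x \<partial>M) = (\<integral>x. c x * real_cond_exp M F X x \<partial>M)"
    using ae by (intro integral_cong_AE) auto
  also have "\<dots> = (\<integral>x. c x * X x \<partial>M)"
    using real_cond_exp_intg(2)[OF cX c(1)] by simp
  finally show "(\<integral>x. c x * Y x \<partial>M) = (\<integral>x. c x * X x \<partial>M)" .
qed

lemma integral_inner_real_cond_exp_unbiased:
  fixes h X G :: "'a \<Rightarrow> 'b::euclidean_space"
  assumes h: "h \<in> borel_measurable F" "\<And>x. x \<in> space M \<Longrightarrow> norm (h x) \<le> K"
    and X: "integrable M X" and G: "G \<in> borel_measurable M"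
    and unbiased: "\<And>b. b \<in> Basis \<Longrightarrow> AE x in M. real_cond_exp M F (\<lambda>x. X x \<bullet> b) x = G x \<bullet> b"
  shows "integrable M (\<lambda>x. h x \<bullet> (G x - X x))" "(\<integral>x. h x \<bullet> (G x - X x) \<partial>M) = 0"
proof -
  have [measurable]: "h \<in> borel_measurable M" "X \<in> borel_measurable M"
    using measurable_from_subalg[OF subalg h(1)] X by auto
  have component: "integrable M (\<lambda>x. (h x \<bullet> b) * (G x \<bullet> b))"
      "integrable M (\<lambda>x. (h x \<bullet> b) * (X x \<bullet> b))"
      "(\<integral>x. (h x \<bullet> b) * (G x \<bullet> b) \<partial>M) = (\<integral>x. (h x \<bullet> b) * (X x \<bullet> b) \<partial>M)"
    if b: "b \<in> Basis" for b
  proof -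
    have bound: "\<bar>h x \<bullet> b\<bar> \<le> K" if "x \<in> space M" for x
      using Basis_le_norm[OF b, of "h x"] h(2)[OF that] by (simp add: inner_commute)
    have hb: "(\<lambda>x. h x \<bullet> b) \<in> borel_measurable F"
      using h(1) by measurable
    have Xb: "integrable M (\<lambda>x. X x \<bullet> b)"
      using X by simp
    have Gb: "(\<lambda>x. G x \<bullet> b) \<in> borel_measurable M"
      using G by measurable
    show "integrable M (\<lambda>x. (h x \<bullet> b) * (G x \<bullet> b))"
      "(\<integral>x. (h x \<bullet> b) * (G x \<bullet> b) \<partial>M) = (\<integral>x. (h x \<bullet> b) * (X x \<bullet> b) \<partial>M)"
      using integral_mult_real_cond_exp_AE_eq[OF hb bound Xb Gb unbiased[OF b]] by auto
    show "integrable M (\<lambda>x. (h x \<bullet> b) * (X x \<bullet> b))"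
      by (rule integrable_bounded_mult[OF Xb _ bound]) measurable
  qed
  have expand: "h x \<bullet> (G x - X x) = (\<Sum>b\<in>Basis. (h x \<bullet> b) * (G x \<bullet> b) - (h x \<bullet> b) * (X x \<bullet> b))" for x
    by (subst euclidean_inner) (simp add: inner_diff_left right_diff_distrib)
  show "integrable M (\<lambda>x. h x \<bullet> (G x - X x))"
    unfolding expand using component by (intro Bochner_Integration.integrable_sum
        Bochner_Integration.integrable_diff) auto
  show "(\<integral>x. h x \<bullet> (G x - X x) \<partial>M) = 0"
    unfolding expand using component
    by (simp add: Bochner_Integration.integral_sum Bochner_Integration.integral_diff)
qed

lemma integral_mult_mono_real_cond_exp:
  fixes c d X Y :: "'a \<Rightarrow> real"
  assumes c: "c \<in> borel_measurable F" "\<And>x. x \<in> space M \<Longrightarrow> \<bar>c x\<bar> \<le> K"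
    and d: "d \<in> borel_measurable F" "\<And>x. x \<in> space M \<Longrightarrow> \<bar>d x\<bar> \<le> K'"
    and X: "integrable M X" and Y: "integrable M Y"
    and le: "AE x in M. c x * real_cond_exp M F X x \<le> d x * real_cond_exp M F Y x"
  shows "(\<integral>x. c x * X x \<partial>M) \<le> (\<integral>x. d x * Y x \<partial>M)"
proof -
  have cX: "integrable M (\<lambda>x. c x * X x)"
    using integrable_bounded_mult[OF X measurable_from_subalg[OF subalg c(1)] c(2)] .
  have dY: "integrable M (\<lambda>x. d x * Y x)"
    using integrable_bounded_mult[OF Y measurable_from_subalg[OF subalg d(1)] d(2)] .
  have "(\<integral>x. c x * X x \<partial>M) = (\<integral>x. c x * real_cond_exp M F X x \<partial>M)"
    using real_cond_exp_intg(2)[OF cX c(1)] X by simp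
  also have "\<dots> \<le> (\<integral>x. d x * real_cond_exp M F Y x \<partial>M)"
    using real_cond_exp_intg(1)[OF cX c(1)] real_cond_exp_intg(1)[OF dY d(1)] X Y le
    by (intro integral_mono_AE) auto
  also have "\<dots> = (\<integral>x. d x * Y x \<partial>M)"
    using real_cond_exp_intg(2)[OF dY d(1)] Y by simp
  finally show ?thesis .
qed

end

section \<open>The accelerated random search iteration\<close>

locale pars_opt = prob_space M
  for M :: "'w measure" +
  fixes F :: "nat \<Rightarrow> 'w measure"
    and f :: "'d::euclidean_space \<Rightarrow> real" and gradf :: "'d \<Rightarrow> 'd"
    and L Lhat gamma0 :: real and thetastar theta0 :: 'd
    and s T :: nat
    and zeta alpha gamma :: "nat \<Rightarrow> 'w \<Rightarrow> real"
    and theta m thetat g1 g2 v :: "nat \<Rightarrow> 'w \<Rightarrow> 'd"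
    and p :: "nat \<Rightarrow> nat \<Rightarrow> 'w \<Rightarrow> 'd"
  assumes filt: "filtration (space M) F"
    and sub: "\<And>t. subalgebra M (F t)"
    and convex: "convex_on UNIV f"
    and grad: "\<And>x. GDERIV f x :> gradf x"
    and smooth: "L-lipschitz_on UNIV gradf"
    and minimizer: "\<And>x. f thetastar \<le> f x"
    and Lhat: "Lhat \<ge> L"
    and gamma0: "gamma0 > 0"
    and init_theta: "\<And>w. w \<in> space M \<Longrightarrow> theta 0 w = theta0"
    and init_m: "\<And>w. w \<in> space M \<Longrightarrow> m 0 w = theta0"
    and init_gamma: "\<And>w. w \<in> space M \<Longrightarrow> gamma 0 w = gamma0"
    and zeta_pos: "\<And>t w. t < T \<Longrightarrow> w \<in> space M \<Longrightarrow> zeta t w > 0"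
    and zeta_meas: "\<And>t. t < T \<Longrightarrow> zeta t \<in> borel_measurable (F t)"
    and alpha_range: "\<And>t w. t < T \<Longrightarrow> w \<in> space M \<Longrightarrow> 0 < alpha t w \<and> alpha t w < 1"
    and alpha_eq: "\<And>t w. t < T \<Longrightarrow> w \<in> space M \<Longrightarrow>
        (alpha t w)\<^sup>2 = zeta t w * gamma t w * (1 - alpha t w)"
    and thetat_def: "\<And>t w. t < T \<Longrightarrow> w \<in> space M \<Longrightarrow>
        thetat t w = (1 - alpha t w) *\<^sub>R theta t w + alpha t w *\<^sub>R m t w"
    and gamma_next: "\<And>t w. t < T \<Longrightarrow> w \<in> space M \<Longrightarrow>
        gamma (Suc t) w = (1 - alpha t w) * gamma t w"
    and v_meas: "\<And>t. t < T \<Longrightarrow> v t \<in> borel_measurable (F (Suc t))"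
    and p_meas: "\<And>t i. t < T \<Longrightarrow> i \<in> {1..s} \<Longrightarrow> p t i \<in> borel_measurable (F (Suc t))"
    and g2_meas: "\<And>t. t < T \<Longrightarrow> g2 t \<in> borel_measurable (F (Suc t))"
    and v_unit: "\<And>t w. t < T \<Longrightarrow> w \<in> space M \<Longrightarrow> norm (v t w) = 1"
    and p_unit: "\<And>t i w. t < T \<Longrightarrow> i \<in> {1..s} \<Longrightarrow> w \<in> space M \<Longrightarrow> norm (p t i w) = 1"
    and vp_orth: "\<And>t i w. t < T \<Longrightarrow> i \<in> {1..s} \<Longrightarrow> w \<in> space M \<Longrightarrow> v t w \<bullet> p t i w = 0"
    and pp_orth: "\<And>t i j w. t < T \<Longrightarrow> i \<in> {1..s} \<Longrightarrow> j \<in> {1..s} \<Longrightarrow> i \<noteq> j \<Longrightarrow>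
        w \<in> space M \<Longrightarrow> p t i w \<bullet> p t j w = 0"
    and g1_def: "\<And>t w. t < T \<Longrightarrow> w \<in> space M \<Longrightarrow>
        g1 t w = (gradf (thetat t w) \<bullet> v t w) *\<^sub>R v t w
               + (\<Sum>i=1..s. (gradf (thetat t w) \<bullet> p t i w) *\<^sub>R p t i w)"
    and g1_sq_int: "\<And>t. t < T \<Longrightarrow> integrable M (\<lambda>w. (norm (g1 t w))\<^sup>2)"
    and g2_sq_int: "\<And>t. t < T \<Longrightarrow> integrable M (\<lambda>w. (norm (g2 t w))\<^sup>2)"
    and g2_unbiased: "\<And>t b. t < T \<Longrightarrow> b \<in> Basis \<Longrightarrow>
        AE w in M. real_cond_exp M (F t) (\<lambda>w. g2 t w \<bullet> b) w = gradf (thetat t w) \<bullet> b"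
    and zeta_le: "\<And>t. t < T \<Longrightarrow>
        AE w in M. zeta t w \<le> real_cond_exp M (F t) (\<lambda>w. (norm (g1 t w))\<^sup>2) w
                      / (Lhat * real_cond_exp M (F t) (\<lambda>w. (norm (g2 t w))\<^sup>2) w)"
    and theta_next: "\<And>t w. t < T \<Longrightarrow> w \<in> space M \<Longrightarrow>
        theta (Suc t) w = thetat t w - (1 / Lhat) *\<^sub>R g1 t w"
    and m_next: "\<And>t w. t < T \<Longrightarrow> w \<in> space M \<Longrightarrow>
        m (Suc t) w = m t w - (zeta t w / alpha t w) *\<^sub>R g2 t w"
begin

lemma space_F: "space (F t) = space M"
  using sub by (simp add: subalgebra_def)

lemma measurable_F_M: "g \<in> measurable (F t) N \<Longrightarrow> g \<in> measurable M N"
  by (rule measurable_from_subalg[OF sub])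

lemma measurable_F_Suc: "g \<in> measurable (F t) N \<Longrightarrow> g \<in> measurable (F (Suc t)) N"
proof (rule measurable_from_subalg)
  show "subalgebra (F (Suc t)) (F t)"
    using filtration.sets_F_mono[OF filt, of t "Suc t"] space_F by (simp add: subalgebra_def)
qed

lemma measurable_F_cong:
  "(\<And>w. w \<in> space M \<Longrightarrow> g w = h w) \<Longrightarrow> h \<in> measurable (F t) N \<Longrightarrow> g \<in> measurable (F t) N"
  using measurable_cong[of "F t" g h N] space_F by metis

lemma sigma_finite_subalgebra_F: "sigma_finite_subalgebra M (F t)"
proof (rule finite_measure_subalgebra_is_sigma_finite)
  show "finite_measure_subalgebra M (F t)"
    by (intro finite_measure_subalgebra.intro finite_measure_axioms)
       (simp add: finite_measure_subalgebra_axioms_def sub)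
qed

lemma gradf_measurable [measurable]: "gradf \<in> borel_measurable borel"
  by (rule borel_measurable_continuous_onI[OF lipschitz_on_continuous_on[OF smooth]])

lemma f_measurable [measurable]: "f \<in> borel_measurable borel"
proof (rule borel_measurable_continuous_onI)
  show "continuous_on UNIV f"
    using grad by (auto simp: gderiv_def intro: continuous_at_imp_continuous_on has_derivative_continuous)
qed

(* Lhat > 0 is not assumed: for Lhat = 0 the division in (iv) yields 0 and forces zeta t <= 0. *)
lemma Lhat_pos: "t < T \<Longrightarrow> 0 < Lhat"
proof (rule ccontr)
  assume "t < T" "\<not> 0 < Lhat"
  moreover have "0 \<le> L"
    using smooth by (simp add: lipschitz_on_def)
  ultimately have "Lhat = 0"
    using Lhat by simp
  then have "AE w in M. zeta t w \<le> 0"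
    using zeta_le[OF \<open>t < T\<close>] by simp
  moreover have "AE w in M. 0 < zeta t w"
    using zeta_pos[OF \<open>t < T\<close>] by simp
  ultimately have "AE w in M. False"
    by eventually_elim simp
  then show False
    by simp
qed

lemma gamma_pos: "t \<le> T \<Longrightarrow> w \<in> space M \<Longrightarrow> 0 < gamma t w"
proof (induction t)
  case 0
  then show ?case using init_gamma gamma0 by simp
next
  case (Suc t)
  then show ?case using gamma_next[of t w] alpha_range[of t w] by simp
qed

(* alpha t is not assumed measurable; as the positive root of a^2 + c a - c = 0 with
   c = zeta t * gamma t it is a Borel function of c. *)
lemma alpha_root:
  assumes "t < T" "w \<in> space M"
  shows "alpha t w = (sqrt ((zeta t w * gamma t w)\<^sup>2 + 4 * (zeta t w * gamma t w))
                      - zeta t w * gamma t w) / 2"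
proof -
  define c where "c = zeta t w * gamma t w"
  have "0 < c"
    using assms zeta_pos gamma_pos by (simp add: c_def)
  have "(2 * alpha t w + c)\<^sup>2 = c\<^sup>2 + 4 * c"
    using alpha_eq[OF assms] by (simp add: c_def power2_eq_square algebra_simps)
  then have "sqrt (c\<^sup>2 + 4 * c) = 2 * alpha t w + c"
    using alpha_range[OF assms] \<open>0 < c\<close> by (intro real_sqrt_unique) auto
  then show ?thesis
    by (simp add: c_def)
qed

lemma step_measurable:
  assumes t: "t < T"
    and [measurable]: "theta t \<in> borel_measurable (F t)" "m t \<in> borel_measurable (F t)"
      "gamma t \<in> borel_measurable (F t)"
  shows "alpha t \<in> borel_measurable (F t)" "thetat t \<in> borel_measurable (F t)"
    "gamma (Suc t) \<in> borel_measurable (F t)" "g1 t \<in> borel_measurable (F (Suc t))"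
    "theta (Suc t) \<in> borel_measurable (F (Suc t))" "m (Suc t) \<in> borel_measurable (F (Suc t))"
proof -
  note [measurable] = zeta_meas[OF t] v_meas[OF t] g2_meas[OF t] p_meas[OF t]
  show alpha [measurable]: "alpha t \<in> borel_measurable (F t)"
    by (rule measurable_F_cong[OF alpha_root[OF t]]) measurable
  show thetat [measurable]: "thetat t \<in> borel_measurable (F t)"
    by (rule measurable_F_cong[OF thetat_def[OF t]]) measurable
  show "gamma (Suc t) \<in> borel_measurable (F t)"
    by (rule measurable_F_cong[OF gamma_next[OF t]]) measurable
  note [measurable] = measurable_F_Suc[OF alpha] measurable_F_Suc[OF thetat]
    measurable_F_Suc[of "zeta t"] measurable_F_Suc[of "theta t"] measurable_F_Suc[of "m t"]
  show g1 [measurable]: "g1 t \<in> borel_measurable (F (Suc t))"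
    by (rule measurable_F_cong[OF g1_def[OF t]]) measurable
  show "theta (Suc t) \<in> borel_measurable (F (Suc t))"
    by (rule measurable_F_cong[OF theta_next[OF t]]) measurable
  show "m (Suc t) \<in> borel_measurable (F (Suc t))"
    by (rule measurable_F_cong[OF m_next[OF t]]) measurable
qed

lemma iterates_measurable:
  assumes "t \<le> T"
  shows "theta t \<in> borel_measurable (F t) \<and> m t \<in> borel_measurable (F t)
    \<and> gamma t \<in> borel_measurable (F t)"
  using assms
proof (induction t)
  case 0
  show ?case
    using measurable_F_cong[of "theta 0" "\<lambda>_. theta0"] measurable_F_cong[of "m 0" "\<lambda>_. theta0"]
      measurable_F_cong[of "gamma 0" "\<lambda>_. gamma0"] init_theta init_m init_gamma
    by simp
next
  case (Suc t)
  then have "t < T" by simp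
  with Suc step_measurable[of t] measurable_F_cong[OF gamma_next] show ?case
    by (auto intro: measurable_F_Suc)
qed

lemma inv_sqrt_gamma_ge:
  assumes "t \<le> T" "w \<in> space M"
  shows "1 / sqrt gamma0 + (\<Sum>k<t. sqrt (zeta k w)) / 2 \<le> 1 / sqrt (gamma t w)"
  using assms(1)
proof (induction t)
  case 0
  then show ?case using init_gamma[OF assms(2)] by simp
next
  case (Suc t)
  then have t: "t < T" by simp
  have "1 / sqrt gamma0 + (\<Sum>k<Suc t. sqrt (zeta k w)) / 2
      = (1 / sqrt gamma0 + (\<Sum>k<t. sqrt (zeta k w)) / 2) + sqrt (zeta t w) / 2"
    by (simp add: add_divide_distrib)
  also have "\<dots> \<le> 1 / sqrt (gamma t w) + sqrt (zeta t w) / 2"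
    using Suc by simp
  also have "\<dots> \<le> 1 / sqrt ((1 - alpha t w) * gamma t w)"
    using gamma_pos[of t w] alpha_range[OF t assms(2)] alpha_eq[OF t assms(2)] t assms(2)
    by (intro inv_sqrt_step_bound) auto
  also have "\<dots> = 1 / sqrt (gamma (Suc t) w)"
    using gamma_next[OF t assms(2)] by simp
  finally show ?case .
qed

lemma inner_gradient_g1:
  assumes t: "t < T" and w: "w \<in> space M"
  shows "gradf (thetat t w) \<bullet> g1 t w = (norm (g1 t w))\<^sup>2"
proof -
  define e where "e i = (if i = 0 then v t w else p t i w)" for i
  have "g1 t w = (\<Sum>i\<in>{0..s}. (gradf (thetat t w) \<bullet> e i) *\<^sub>R e i)"
    by (simp add: g1_def[OF t w] sum.atLeast_Suc_atMost e_def)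
  moreover have "gradf (thetat t w) \<bullet> (\<Sum>i\<in>{0..s}. (gradf (thetat t w) \<bullet> e i) *\<^sub>R e i)
      = (norm (\<Sum>i\<in>{0..s}. (gradf (thetat t w) \<bullet> e i) *\<^sub>R e i))\<^sup>2"
    using v_unit[OF t w] p_unit[OF t _ w] vp_orth[OF t _ w] pp_orth[OF t _ _ _ w]
    by (intro inner_orthonormal_projection) (auto simp: e_def inner_commute)
  ultimately show ?thesis
    by simp
qed

definition lyapunov :: "nat \<Rightarrow> 'w \<Rightarrow> real" where
  "lyapunov t w = gamma0 / gamma t w * (f (theta t w) - f thetastar)
                  + gamma0 / 2 * (norm (m t w - thetastar))\<^sup>2"

definition drift :: "nat \<Rightarrow> 'w \<Rightarrow> real" where
  "drift t w = alpha t w * ((gradf (thetat t w) - g2 t w) \<bullet> (m t w - thetastar))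
               + zeta t w / 2 * (norm (g2 t w))\<^sup>2 - (norm (g1 t w))\<^sup>2 / (2 * Lhat)"

lemma lyapunov_nonneg: "t \<le> T \<Longrightarrow> w \<in> space M \<Longrightarrow> 0 \<le> lyapunov t w"
  unfolding lyapunov_def using gamma_pos[of t w] gamma0 minimizer[of "theta t w"] by simp

lemma lyapunov_measurable: "t \<le> T \<Longrightarrow> lyapunov t \<in> borel_measurable M"
  using iterates_measurable[of t] unfolding lyapunov_def[abs_def]
  by (auto intro!: borel_measurable_add borel_measurable_times borel_measurable_divide
      measurable_F_M)

lemma lyapunov_step_pointwise:
  assumes t: "t < T" and w: "w \<in> space M"
  shows "lyapunov (Suc t) w \<le> lyapunov t w + gamma0 / gamma (Suc t) w * drift t w"
proof -
  let ?a = "alpha t w" and ?g = "gamma t w"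
  let ?Phi' = "f (theta (Suc t) w) - f thetastar
      + (1 - ?a) * ?g / 2 * (norm (m (Suc t) w - thetastar))\<^sup>2"
  define Phi where "Phi = f (theta t w) - f thetastar + ?g / 2 * (norm (m t w - thetastar))\<^sup>2"
  define c where "c = gamma0 / gamma (Suc t) w"
  have a: "0 < ?a" "?a < 1" and "0 < ?g"
    using alpha_range[OF t w] gamma_pos[of t w] t w by auto
  have "0 < c"
    using gamma_pos[of "Suc t" w] gamma0 t w by (simp add: c_def)
  have c_mult: "c * (1 - ?a) * ?g = gamma0"
    using gamma_next[OF t w] a \<open>0 < ?g\<close> by (simp add: c_def)
  have "?Phi' \<le> (1 - ?a) * Phi + drift t w"
    unfolding theta_next[OF t w] m_next[OF t w] Phi_def drift_def
    using accelerated_step_potential_bound[where ts = thetastar and h = "g2 t w",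
        OF convex grad smooth Lhat Lhat_pos[OF t] a alpha_eq[OF t w] thetat_def[OF t w]
        inner_gradient_g1[OF t w]]
    by linarith
  have "lyapunov (Suc t) w = c * (f (theta (Suc t) w) - f thetastar)
      + (c * (1 - ?a) * ?g) / 2 * (norm (m (Suc t) w - thetastar))\<^sup>2"
    unfolding c_mult by (simp add: lyapunov_def c_def)
  also have "\<dots> = c * ?Phi'"
    by (simp add: algebra_simps)
  also have "\<dots> \<le> c * ((1 - ?a) * Phi + drift t w)"
    using \<open>?Phi' \<le> _\<close> \<open>0 < c\<close> by (intro mult_left_mono) auto
  also have "\<dots> = (c * (1 - ?a) * ?g) / ?g * Phi + c * drift t w"
    using \<open>0 < ?g\<close> by (simp add: field_simps)
  also have "\<dots> = lyapunov t w + gamma0 / gamma (Suc t) w * drift t w"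
    unfolding c_mult using \<open>0 < ?g\<close> by (simp add: lyapunov_def Phi_def c_def algebra_simps)
  finally show ?thesis .
qed

lemma g2_integrable: "t < T \<Longrightarrow> integrable M (g2 t)"
  using g2_sq_int[of t] measurable_F_M[OF g2_meas[of t]]
  by (subst integrable_norm_iff[symmetric]) (auto intro: square_integrable_imp_integrable)

lemma step_size_condition_AE:
  assumes t: "t < T"
  shows "AE w in M. zeta t w * real_cond_exp M (F t) (\<lambda>w. (norm (g2 t w))\<^sup>2) w
    \<le> real_cond_exp M (F t) (\<lambda>w. (norm (g1 t w))\<^sup>2) w / Lhat"
proof -
  interpret Ft: sigma_finite_subalgebra M "F t"
    by (rule sigma_finite_subalgebra_F)
  note [measurable] = measurable_F_M[OF g2_meas[OF t]]
  have "AE w in M. 0 \<le> real_cond_exp M (F t) (\<lambda>w. (norm (g2 t w))\<^sup>2) w"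
    by (rule Ft.real_cond_exp_pos) auto
  with zeta_le[OF t] AE_space show ?thesis
  proof eventually_elim
    case (elim w)
    let ?E2 = "real_cond_exp M (F t) (\<lambda>w. (norm (g2 t w))\<^sup>2) w"
    have "0 < zeta t w"
      using zeta_pos[OF t] elim by simp
    with elim have "0 < ?E2"
      by (cases "?E2 = 0") auto
    with elim Lhat_pos[OF t] show ?case
      by (simp add: le_divide_eq field_simps)
  qed
qed

lemma weighted_cross_term_integral_zero:
  assumes t: "t < T" and c [measurable]: "c \<in> borel_measurable (F t)"
    and bound: "\<And>w. w \<in> space M \<Longrightarrow> 0 \<le> c w \<and> c w * norm (m t w - thetastar) \<le> K"
  defines "X \<equiv> \<lambda>w. c w * alpha t w * ((gradf (thetat t w) - g2 t w) \<bullet> (m t w - thetastar))"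
  shows "integrable M X" "(\<integral>w. X w \<partial>M) = 0"
proof -
  interpret Ft: sigma_finite_subalgebra M "F t"
    by (rule sigma_finite_subalgebra_F)
  have iter [measurable]: "theta t \<in> borel_measurable (F t)" "m t \<in> borel_measurable (F t)"
      "gamma t \<in> borel_measurable (F t)"
    using iterates_measurable[of t] t by auto
  note [measurable] = step_measurable(1,2)[OF t iter] measurable_F_M[OF step_measurable(2)[OF t iter]]
  define h where "h w = (c w * alpha t w) *\<^sub>R (m t w - thetastar)" for w
  have X_eq: "X = (\<lambda>w. h w \<bullet> (gradf (thetat t w) - g2 t w))"
    by (simp add: X_def h_def inner_commute)
  have "norm (h w) \<le> K" if w: "w \<in> space M" for w
  proof -
    have "norm (h w) = alpha t w * (c w * norm (m t w - thetastar))"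
      using bound[OF w] alpha_range[OF t w] by (simp add: h_def abs_mult)
    also have "\<dots> \<le> c w * norm (m t w - thetastar)"
      using bound[OF w] alpha_range[OF t w] by (intro mult_left_le_one_le) auto
    finally show ?thesis
      using bound[OF w] by linarith
  qed
  from Ft.integral_inner_real_cond_exp_unbiased[OF _ this g2_integrable[OF t] _ g2_unbiased[OF t]]
  show "integrable M X" "(\<integral>w. X w \<partial>M) = 0"
    unfolding X_eq h_def by measurable
qed

lemma weighted_quadratic_terms_integral_le:
  assumes t: "t < T" and c [measurable]: "c \<in> borel_measurable (F t)"
    and bound: "\<And>w. w \<in> space M \<Longrightarrow> 0 \<le> c w \<and> c w \<le> K \<and> c w * zeta t w \<le> K"
  shows "integrable M (\<lambda>w. c w * zeta t w / 2 * (norm (g2 t w))\<^sup>2)"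
    "integrable M (\<lambda>w. c w / (2 * Lhat) * (norm (g1 t w))\<^sup>2)"
    "(\<integral>w. c w * zeta t w / 2 * (norm (g2 t w))\<^sup>2 \<partial>M)
      \<le> (\<integral>w. c w / (2 * Lhat) * (norm (g1 t w))\<^sup>2 \<partial>M)"
proof -
  interpret Ft: sigma_finite_subalgebra M "F t"
    by (rule sigma_finite_subalgebra_F)
  note [measurable] = zeta_meas[OF t]
  define c2 where "c2 w = c w * zeta t w / 2" for w
  define c3 where "c3 w = c w / (2 * Lhat)" for w
  have c2 [measurable]: "c2 \<in> borel_measurable (F t)" and c3 [measurable]: "c3 \<in> borel_measurable (F t)"
    unfolding c2_def c3_def by measurable
  have "0 < Lhat"
    using Lhat_pos[OF t] .
  have c2_bound: "\<bar>c2 w\<bar> \<le> K" if w: "w \<in> space M" for w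
    using bound[OF w] zeta_pos[OF t w] by (simp add: c2_def)
  have c3_bound: "\<bar>c3 w\<bar> \<le> K / (2 * Lhat)" if w: "w \<in> space M" for w
    using bound[OF w] \<open>0 < Lhat\<close> by (simp add: c3_def divide_right_mono)
  have "integrable M (\<lambda>w. c2 w * (norm (g2 t w))\<^sup>2)"
    by (rule integrable_bounded_mult[OF g2_sq_int[OF t] measurable_F_M[OF c2] c2_bound])
  moreover have "integrable M (\<lambda>w. c3 w * (norm (g1 t w))\<^sup>2)"
    by (rule integrable_bounded_mult[OF g1_sq_int[OF t] measurable_F_M[OF c3] c3_bound])
  moreover have "AE w in M. c2 w * real_cond_exp M (F t) (\<lambda>w. (norm (g2 t w))\<^sup>2) w
      \<le> c3 w * real_cond_exp M (F t) (\<lambda>w. (norm (g1 t w))\<^sup>2) w"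
    using step_size_condition_AE[OF t] AE_space
  proof eventually_elim
    case (elim w)
    then have "c w / 2 * (zeta t w * real_cond_exp M (F t) (\<lambda>w. (norm (g2 t w))\<^sup>2) w)
        \<le> c w / 2 * (real_cond_exp M (F t) (\<lambda>w. (norm (g1 t w))\<^sup>2) w / Lhat)"
      using bound by (intro mult_left_mono) auto
    then show ?case
      by (simp add: c2_def c3_def field_simps)
  qed
  then have "(\<integral>w. c2 w * (norm (g2 t w))\<^sup>2 \<partial>M) \<le> (\<integral>w. c3 w * (norm (g1 t w))\<^sup>2 \<partial>M)"
    by (intro Ft.integral_mult_mono_real_cond_exp[OF _ c2_bound _ c3_bound g2_sq_int[OF t]
        g1_sq_int[OF t]]) measurable
  ultimately show "integrable M (\<lambda>w. c w * zeta t w / 2 * (norm (g2 t w))\<^sup>2)"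
    "integrable M (\<lambda>w. c w / (2 * Lhat) * (norm (g1 t w))\<^sup>2)"
    "(\<integral>w. c w * zeta t w / 2 * (norm (g2 t w))\<^sup>2 \<partial>M)
      \<le> (\<integral>w. c w / (2 * Lhat) * (norm (g1 t w))\<^sup>2 \<partial>M)"
    unfolding c2_def c3_def by auto
qed

lemma weighted_drift_integral_nonpos:
  assumes t: "t < T" and c: "c \<in> borel_measurable (F t)"
    and bound: "\<And>w. w \<in> space M \<Longrightarrow> 0 \<le> c w \<and> c w \<le> K
      \<and> c w * zeta t w \<le> K \<and> c w * norm (m t w - thetastar) \<le> K"
  shows "integrable M (\<lambda>w. c w * drift t w)" "(\<integral>w. c w * drift t w \<partial>M) \<le> 0"
proof -
  have "0 \<le> c w \<and> c w * norm (m t w - thetastar) \<le> K" "0 \<le> c w \<and> c w \<le> K \<and> c w * zeta t w \<le> K"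
    if "w \<in> space M" for w
    using bound[OF that] by auto
  note cross = weighted_cross_term_integral_zero[OF t c this(1)]
    and quadratic = weighted_quadratic_terms_integral_le[OF t c this(2)]
  have "c w * drift t w = c w * alpha t w * ((gradf (thetat t w) - g2 t w) \<bullet> (m t w - thetastar))
      + c w * zeta t w / 2 * (norm (g2 t w))\<^sup>2 - c w / (2 * Lhat) * (norm (g1 t w))\<^sup>2" for w
    by (simp add: drift_def distrib_left right_diff_distrib mult.assoc)
  then show "integrable M (\<lambda>w. c w * drift t w)" "(\<integral>w. c w * drift t w \<partial>M) \<le> 0"
    using cross quadratic by auto
qed

lemma lyapunov_truncated_nn_integral_step:
  assumes t: "t < T" and S: "S \<in> sets (F t)" and "0 \<le> K"
    and bound: "\<And>w. w \<in> S \<Longrightarrow> gamma0 / gamma (Suc t) w \<le> K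
      \<and> gamma0 / gamma (Suc t) w * zeta t w \<le> K
      \<and> gamma0 / gamma (Suc t) w * norm (m t w - thetastar) \<le> K"
  shows "(\<integral>\<^sup>+w. indicator S w * ennreal (lyapunov (Suc t) w) \<partial>M) \<le> (\<integral>\<^sup>+w. lyapunov t w \<partial>M)"
proof -
  define c where "c w = indicator S w * (gamma0 / gamma (Suc t) w)" for w
  have iter: "theta t \<in> borel_measurable (F t)" "m t \<in> borel_measurable (F t)"
      "gamma t \<in> borel_measurable (F t)"
    using iterates_measurable[of t] t by auto
  note [measurable] = S step_measurable(3)[OF t iter]
  have c_meas: "c \<in> borel_measurable (F t)"
    unfolding c_def by measurable
  have c_bound: "0 \<le> c w \<and> c w \<le> K \<and> c w * zeta t w \<le> K \<and> c w * norm (m t w - thetastar) \<le> K"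
    if "w \<in> space M" for w
    using that bound[of w] gamma_pos[of "Suc t" w] gamma0 t \<open>0 \<le> K\<close>
    by (auto simp: c_def space_F split: split_indicator)
  note drift = weighted_drift_integral_nonpos[OF t c_meas c_bound]
  have [measurable]: "S \<in> sets M" "lyapunov t \<in> borel_measurable M"
      "lyapunov (Suc t) \<in> borel_measurable M"
    using S sub[of t] lyapunov_measurable t by (auto simp: subalgebra_def)
  have "(\<integral>\<^sup>+w. ennreal (indicator S w * lyapunov (Suc t) w) \<partial>M) \<le> (\<integral>\<^sup>+w. lyapunov t w \<partial>M)"
  proof (rule nn_integral_le_of_le_add_integral_nonpos[OF _ _ drift])
    fix w assume w: "w \<in> space M"
    show "0 \<le> indicator S w * lyapunov (Suc t) w" "0 \<le> lyapunov t w"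
      using lyapunov_nonneg[of _ w] w t by simp_all
    show "indicator S w * lyapunov (Suc t) w \<le> lyapunov t w + c w * drift t w"
      using lyapunov_step_pointwise[OF t w] lyapunov_nonneg[of t w] w t
      by (simp add: c_def split: split_indicator)
  qed measurable
  then show ?thesis
    by (simp add: indicator_mult_ennreal)
qed

lemma lyapunov_nn_integral_step:
  assumes t: "t < T"
  shows "(\<integral>\<^sup>+w. lyapunov (Suc t) w \<partial>M) \<le> (\<integral>\<^sup>+w. lyapunov t w \<partial>M)"
proof -
  define c where "c w = gamma0 / gamma (Suc t) w" for w
  define A where "A n = {w \<in> space M. c w \<le> real n \<and> c w * zeta t w \<le> real n
      \<and> c w * norm (m t w - thetastar) \<le> real n}" for n
  have iter: "theta t \<in> borel_measurable (F t)" "m t \<in> borel_measurable (F t)"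
      "gamma t \<in> borel_measurable (F t)"
    using iterates_measurable[of t] t by auto
  note [measurable] = step_measurable(3)[OF t iter] zeta_meas[OF t] iter
  have A_sets: "A n \<in> sets (F t)" for n
  proof -
    have "A n = {w \<in> space (F t). c w \<le> real n \<and> c w * zeta t w \<le> real n
        \<and> c w * norm (m t w - thetastar) \<le> real n}"
      by (simp add: A_def space_F)
    also have "\<dots> \<in> sets (F t)"
      unfolding c_def by measurable
    finally show ?thesis .
  qed
  have A_sets_M: "A n \<in> sets M" for n
    using A_sets[of n] sub[of t] unfolding subalgebra_def by blast
  have inc: "incseq A"
    by (rule incseq_SucI) (auto simp: A_def)
  have cover: "space M \<subseteq> (\<Union>n. A n)"
  proof
    fix w assume "w \<in> space M"
    obtain n where "max (c w) (max (c w * zeta t w) (c w * norm (m t w - thetastar))) \<le> real n"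
      using real_arch_simple by blast
    with \<open>w \<in> space M\<close> have "w \<in> A n"
      by (simp add: A_def)
    then show "w \<in> (\<Union>n. A n)"
      by blast
  qed
  have truncated: "(\<integral>\<^sup>+w. indicator (A n) w * ennreal (lyapunov (Suc t) w) \<partial>M)
      \<le> (\<integral>\<^sup>+w. lyapunov t w \<partial>M)" for n
    using A_sets by (rule lyapunov_truncated_nn_integral_step[where K = "real n", OF t])
      (simp_all add: A_def c_def)
  have "lyapunov (Suc t) \<in> borel_measurable M"
    using lyapunov_measurable t by simp
  then show ?thesis
    by (intro nn_integral_le_of_exhausting_truncations[OF inc A_sets_M cover _ truncated]) measurable
qed

lemma lyapunov_nn_integral_le:
  assumes "t \<le> T"
  shows "(\<integral>\<^sup>+w. lyapunov t w \<partial>M)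
    \<le> ennreal (f theta0 - f thetastar + gamma0 / 2 * (norm (theta0 - thetastar))\<^sup>2)"
  using assms
proof (induction t)
  case 0
  have "(\<integral>\<^sup>+w. lyapunov 0 w \<partial>M)
      = (\<integral>\<^sup>+w. ennreal (f theta0 - f thetastar + gamma0 / 2 * (norm (theta0 - thetastar))\<^sup>2) \<partial>M)"
    using gamma0 by (intro nn_integral_cong) (simp add: lyapunov_def init_gamma init_theta init_m)
  then show ?case
    by (simp add: emeasure_space_1)
next
  case (Suc t)
  then show ?case
    using lyapunov_nn_integral_step[of t] by simp
qed

lemma suboptimality_weighted_le_lyapunov:
  assumes w: "w \<in> space M"
  shows "(f (theta T w) - f thetastar) * (1 + sqrt gamma0 / 2 * (\<Sum>t<T. sqrt (zeta t w)))\<^sup>2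
    \<le> lyapunov T w"
proof -
  define S where "S = (\<Sum>t<T. sqrt (zeta t w))"
  have "0 < gamma T w"
    using gamma_pos[OF _ w] by simp
  have "0 \<le> S"
    unfolding S_def using zeta_pos[OF _ w] by (intro sum_nonneg) (simp add: less_imp_le)
  have "1 + sqrt gamma0 / 2 * S = sqrt gamma0 * (1 / sqrt gamma0 + S / 2)"
    using gamma0 by (simp add: field_simps)
  also have "\<dots> \<le> sqrt gamma0 * (1 / sqrt (gamma T w))"
    using inv_sqrt_gamma_ge[OF _ w, of T] gamma0 by (intro mult_left_mono) (simp_all add: S_def)
  finally have "(1 + sqrt gamma0 / 2 * S)\<^sup>2 \<le> (sqrt gamma0 * (1 / sqrt (gamma T w)))\<^sup>2"
    using \<open>0 \<le> S\<close> gamma0 by (intro power_mono) auto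
  also have "\<dots> = gamma0 / gamma T w"
    using gamma0 \<open>0 < gamma T w\<close> by (simp add: power_divide power_mult_distrib)
  finally have "(f (theta T w) - f thetastar) * (1 + sqrt gamma0 / 2 * S)\<^sup>2
      \<le> (f (theta T w) - f thetastar) * (gamma0 / gamma T w)"
    using minimizer by (intro mult_left_mono) simp_all
  also have "\<dots> \<le> lyapunov T w"
    using gamma0 by (simp add: lyapunov_def mult.commute)
  finally show ?thesis
    by (simp add: S_def)
qed

end

theorem theorem2:
  fixes M :: "'w measure" and F :: "nat \<Rightarrow> 'w measure"
    and f :: "'d::euclidean_space \<Rightarrow> real" and gradf :: "'d \<Rightarrow> 'd"
    and L Lhat gamma0 :: real and thetastar theta0 :: 'd
    and s T :: nat
    and zeta alpha gamma :: "nat \<Rightarrow> 'w \<Rightarrow> real"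
    and theta m thetat g1 g2 v :: "nat \<Rightarrow> 'w \<Rightarrow> 'd"
    and p :: "nat \<Rightarrow> nat \<Rightarrow> 'w \<Rightarrow> 'd"
  assumes M: "prob_space M"
    and filt: "filtration (space M) F"
    and sub: "\<And>t. subalgebra M (F t)"
    (* f convex and L-smooth with minimizer thetastar *)
    and convex: "convex_on UNIV f"
    and grad: "\<And>x. GDERIV f x :> gradf x"
    and smooth: "L-lipschitz_on UNIV gradf"
    and minimizer: "\<And>x. f thetastar \<le> f x"
    and Lhat: "Lhat \<ge> L"
    and gamma0: "gamma0 > 0"
    (* initialisation *)
    and init_theta: "\<And>w. w \<in> space M \<Longrightarrow> theta 0 w = theta0"
    and init_m: "\<And>w. w \<in> space M \<Longrightarrow> m 0 w = theta0"
    and init_gamma: "\<And>w. w \<in> space M \<Longrightarrow> gamma 0 w = gamma0"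
    (* (i) step-size parameter *)
    and zeta_pos: "\<And>t w. t < T \<Longrightarrow> w \<in> space M \<Longrightarrow> zeta t w > 0"
    and zeta_meas: "\<And>t. t < T \<Longrightarrow> zeta t \<in> borel_measurable (F t)"
    (* (ii) *)
    and alpha_range: "\<And>t w. t < T \<Longrightarrow> w \<in> space M \<Longrightarrow> 0 < alpha t w \<and> alpha t w < 1"
    and alpha_eq: "\<And>t w. t < T \<Longrightarrow> w \<in> space M \<Longrightarrow>
        (alpha t w)\<^sup>2 = zeta t w * gamma t w * (1 - alpha t w)"
    and thetat_def: "\<And>t w. t < T \<Longrightarrow> w \<in> space M \<Longrightarrow>
        thetat t w = (1 - alpha t w) *\<^sub>R theta t w + alpha t w *\<^sub>R m t w"
    and gamma_next: "\<And>t w. t < T \<Longrightarrow> w \<in> space M \<Longrightarrow>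
        gamma (Suc t) w = (1 - alpha t w) * gamma t w"
    (* (iii) random orthonormal family and gradient estimators *)
    and v_meas: "\<And>t. t < T \<Longrightarrow> v t \<in> borel_measurable (F (Suc t))"
    and p_meas: "\<And>t i. t < T \<Longrightarrow> i \<in> {1..s} \<Longrightarrow> p t i \<in> borel_measurable (F (Suc t))"
    and g2_meas: "\<And>t. t < T \<Longrightarrow> g2 t \<in> borel_measurable (F (Suc t))"
    and v_unit: "\<And>t w. t < T \<Longrightarrow> w \<in> space M \<Longrightarrow> norm (v t w) = 1"
    and p_unit: "\<And>t i w. t < T \<Longrightarrow> i \<in> {1..s} \<Longrightarrow> w \<in> space M \<Longrightarrow> norm (p t i w) = 1"
    and vp_orth: "\<And>t i w. t < T \<Longrightarrow> i \<in> {1..s} \<Longrightarrow> w \<in> space M \<Longrightarrow> v t w \<bullet> p t i w = 0"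
    and pp_orth: "\<And>t i j w. t < T \<Longrightarrow> i \<in> {1..s} \<Longrightarrow> j \<in> {1..s} \<Longrightarrow> i \<noteq> j \<Longrightarrow>
        w \<in> space M \<Longrightarrow> p t i w \<bullet> p t j w = 0"
    and g1_def: "\<And>t w. t < T \<Longrightarrow> w \<in> space M \<Longrightarrow>
        g1 t w = (gradf (thetat t w) \<bullet> v t w) *\<^sub>R v t w
               + (\<Sum>i=1..s. (gradf (thetat t w) \<bullet> p t i w) *\<^sub>R p t i w)"
    and g1_sq_int: "\<And>t. t < T \<Longrightarrow> integrable M (\<lambda>w. (norm (g1 t w))\<^sup>2)"
    and g2_sq_int: "\<And>t. t < T \<Longrightarrow> integrable M (\<lambda>w. (norm (g2 t w))\<^sup>2)"
    and g2_unbiased: "\<And>t b. t < T \<Longrightarrow> b \<in> Basis \<Longrightarrow>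
        AE w in M. real_cond_exp M (F t) (\<lambda>w. g2 t w \<bullet> b) w = gradf (thetat t w) \<bullet> b"
    (* (iv) step-size condition *)
    and zeta_le: "\<And>t. t < T \<Longrightarrow>
        AE w in M. zeta t w \<le> real_cond_exp M (F t) (\<lambda>w. (norm (g1 t w))\<^sup>2) w
                      / (Lhat * real_cond_exp M (F t) (\<lambda>w. (norm (g2 t w))\<^sup>2) w)"
    (* (v) updates *)
    and theta_next: "\<And>t w. t < T \<Longrightarrow> w \<in> space M \<Longrightarrow>
        theta (Suc t) w = thetat t w - (1 / Lhat) *\<^sub>R g1 t w"
    and m_next: "\<And>t w. t < T \<Longrightarrow> w \<in> space M \<Longrightarrow>
        m (Suc t) w = m t w - (zeta t w / alpha t w) *\<^sub>R g2 t w"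
  shows "(\<integral>\<^sup>+ w. ennreal ((f (theta T w) - f thetastar)
            * (1 + sqrt gamma0 / 2 * (\<Sum>t<T. sqrt (zeta t w)))\<^sup>2) \<partial>M)
         \<le> ennreal (f theta0 - f thetastar + gamma0 / 2 * (norm (theta0 - thetastar))\<^sup>2)"
  proof -
  interpret pars_opt M F f gradf L Lhat gamma0 thetastar theta0 s T zeta alpha gamma theta m thetat
      g1 g2 v p
    by (rule pars_opt.intro[OF M pars_opt_axioms.intro]; fact assms)
  have "(\<integral>\<^sup>+ w. ennreal ((f (theta T w) - f thetastar)
            * (1 + sqrt gamma0 / 2 * (\<Sum>t<T. sqrt (zeta t w)))\<^sup>2) \<partial>M)
      \<le> (\<integral>\<^sup>+ w. lyapunov T w \<partial>M)"
    by (intro nn_integral_mono ennreal_leI suboptimality_weighted_le_lyapunov)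
  also have "\<dots> \<le> ennreal (f theta0 - f thetastar + gamma0 / 2 * (norm (theta0 - thetastar))\<^sup>2)"
    by (rule lyapunov_nn_integral_le) simp
  finally show ?thesis .
qed

end
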